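(* There is an absolute constant $C>0$ such that for every finite graph $G=(V,E)$ and every integer $r$ with $1\le r\le\log\vartheta(\overline G)$, \[K(r,G)\le C\,\frac{\log\vartheta(\overline G)}{r}.\]
   Context: For a finite graph $G=(V,E)$, a symmetric matrix $A\colon V\times V\to\mathbb{R}$ and a positive integer $r$, $\mathrm{SDP}_r(G,A)=\max\{\sum_{\{u,v\}\in E}A(u,v)f(u)\cdot f(v): f\colon V\to S^{r-1}\}$, with $S^{r-1}$ the unit sphere of $\mathbb{R}^r$, and $\mathrm{SDP}_\infty(G,A)$ is defined likewise with $f$ taking values in the unit sphere of $\ell^2$ (equivalently $\mathrm{SDP}_{|V|}(G,A)$). $K(r,G)$ is the smallest constant with $\mathrm{SDP}_\infty(G,A)\le K(r,G)\,\mathrm{SDP}_r(G,A)$ for all symmetric $A$. The theta number of the complement of $G$ is $\vartheta(\overline G)=\min\{\lambda: Z\in\mathbb{R}^{V\times V}\text{ positive semidefinite},\ Z(u,u)=\lambda-1\ (u\in V),\ Z(u,v)=-1\ (\{u,v\}\in E)\}$. *)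

theory Defs
  imports Complex_Main
begin

definition fin_graph :: "nat set \<Rightarrow> (nat \<times> nat) set \<Rightarrow> bool" where
  "fin_graph V E \<longleftrightarrow> finite V \<and> E \<subseteq> V \<times> V \<and> (\<forall>u v. (u,v) \<in> E \<longrightarrow> (v,u) \<in> E)
     \<and> (\<forall>u. (u,u) \<notin> E)"

definition edges :: "(nat \<times> nat) set \<Rightarrow> (nat \<times> nat) set" where
  "edges E = {(u,v). (u,v) \<in> E \<and> u < v}"

definition usphere :: "nat \<Rightarrow> (nat \<Rightarrow> real) set" where
  "usphere r = {x. (\<forall>i\<ge>r. x i = 0) \<and> (\<Sum>i<r. (x i)^2) = 1}"

definition ip :: "nat \<Rightarrow> (nat \<Rightarrow> real) \<Rightarrow> (nat \<Rightarrow> real) \<Rightarrow> real" where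
  "ip r x y = (\<Sum>i<r. x i * y i)"

definition sym_mat :: "nat set \<Rightarrow> (nat \<Rightarrow> nat \<Rightarrow> real) \<Rightarrow> bool" where
  "sym_mat V A \<longleftrightarrow> (\<forall>u\<in>V. \<forall>v\<in>V. A u v = A v u)"

definition SDP :: "nat \<Rightarrow> nat set \<Rightarrow> (nat \<times> nat) set \<Rightarrow> (nat \<Rightarrow> nat \<Rightarrow> real) \<Rightarrow> real" where
  "SDP r V E A = Sup {(\<Sum>(u,v)\<in>edges E. A u v * ip r (f u) (f v)) | f.
                       \<forall>u\<in>V. f u \<in> usphere r}"

text \<open>SDP_infinity, taken as SDP_{|V|} (equivalent to the l^2 version).\<close>
definition SDP_inf :: "nat set \<Rightarrow> (nat \<times> nat) set \<Rightarrow> (nat \<Rightarrow> nat \<Rightarrow> real) \<Rightarrow> real" where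
  "SDP_inf V E A = SDP (card V) V E A"

definition Kconst :: "nat \<Rightarrow> nat set \<Rightarrow> (nat \<times> nat) set \<Rightarrow> real" where
  "Kconst r V E = Inf {K. \<forall>A. sym_mat V A \<longrightarrow> SDP_inf V E A \<le> K * SDP r V E A}"

definition psd :: "nat set \<Rightarrow> (nat \<Rightarrow> nat \<Rightarrow> real) \<Rightarrow> bool" where
  "psd V Z \<longleftrightarrow> sym_mat V Z \<and> (\<forall>x. (\<Sum>u\<in>V. \<Sum>v\<in>V. x u * Z u v * x v) \<ge> 0)"

definition theta_compl :: "nat set \<Rightarrow> (nat \<times> nat) set \<Rightarrow> real" where
  "theta_compl V E = Inf {lam. \<exists>Z. psd V Z \<and> (\<forall>u\<in>V. Z u u = lam - 1)
                              \<and> (\<forall>(u,v)\<in>E. Z u v = -1)}"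

end

theory Submission
  imports Defs "HOL-Library.FuncSet" "HOL-Analysis.Convex"
begin

text \<open>Take a vector solution \<open>x\<close> of \<open>SDP\<^sub>\<infinity>\<close> and a witness \<open>Z\<close> for \<open>\<lambda> \<approx> \<vartheta>(G\<^sup>c)\<close>.
  Project \<open>x\<close> to \<open>\<real>\<^sup>r\<close> by \<open>r\<close> random sign vectors and truncate the projections at
  length \<open>\<surd>R\<close>, where \<open>R \<approx> r + log \<lambda>\<close>. Averaged over all sign choices, the projections
  reproduce the Gram matrix of \<open>x\<close>; the truncated ones are feasible for \<open>R\<cdot>SDP\<^sub>r\<close>; and by
  the subgaussian tails of Rademacher sums the truncation error has squared length at most
  \<open>1/(100\<lambda>\<^sup>2)\<close>. The error term is controlled by the theta trick: for vectors \<open>p, q\<close>,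
  the matrix \<open>\<langle>p\<^sub>u, p\<^sub>v\<rangle> + Z\<^sub>u\<^sub>v\<langle>q\<^sub>u, q\<^sub>v\<rangle>\<close> is psd and equals
  \<open>\<langle>p\<^sub>u, p\<^sub>v\<rangle> - \<langle>q\<^sub>u, q\<^sub>v\<rangle>\<close> on edges, so it costs at most \<open>SDP\<^sub>\<infinity>/4\<close>.
  Hence \<open>SDP\<^sub>\<infinity> \<le> (R/r) SDP\<^sub>r + SDP\<^sub>\<infinity>/4\<close>.\<close>

definition sdp_obj :: "nat \<Rightarrow> (nat \<times> nat) set \<Rightarrow> (nat \<Rightarrow> nat \<Rightarrow> real) \<Rightarrow> (nat \<Rightarrow> nat \<Rightarrow> real) \<Rightarrow> real"
  where "sdp_obj r E A f = (\<Sum>(u,v)\<in>edges E. A u v * ip r (f u) (f v))"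

lemma SDP_eq_Sup_sdp_obj: "SDP r V E A = Sup {sdp_obj r E A f | f. \<forall>u\<in>V. f u \<in> usphere r}"
  unfolding SDP_def sdp_obj_def ..

lemma finite_edges: "fin_graph V E \<Longrightarrow> finite (edges E)"
  unfolding fin_graph_def edges_def by (auto intro: finite_subset[of _ "V \<times> V"])

lemma edges_in_vertices: "fin_graph V E \<Longrightarrow> (u,v) \<in> edges E \<Longrightarrow> u \<in> V \<and> v \<in> V \<and> u < v"
  unfolding fin_graph_def edges_def by blast

lemma ip_commute: "ip r x y = ip r y x"
  unfolding ip_def by (simp add: mult_ac)

lemma ip_add_right: "ip r z (\<lambda>i. x i + y i) = ip r z x + ip r z y"
  unfolding ip_def by (simp add: distrib_left sum.distrib)

lemma ip_scale_right: "ip r z (\<lambda>i. c * x i) = c * ip r z x"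
  unfolding ip_def by (simp add: sum_distrib_left mult_ac)

lemma ip_sum_right: "finite S \<Longrightarrow> ip r z (\<lambda>i. \<Sum>e\<in>S. g e i) = (\<Sum>e\<in>S. ip r z (g e))"
  unfolding ip_def by (simp add: sum_distrib_left sum.swap[of _ S])

lemma ip_zero_left: "ip r (\<lambda>i. 0) x = 0"
  unfolding ip_def by simp

lemma ip_zero_right: "ip r x (\<lambda>i. 0) = 0"
  unfolding ip_def by simp

lemma abs_ip_le: "\<bar>ip r x y\<bar> \<le> ((\<Sum>i<r. (x i)^2) + (\<Sum>i<r. (y i)^2)) / 2"
proof -
  have "\<bar>ip r x y\<bar> \<le> (\<Sum>i<r. \<bar>x i * y i\<bar>)"
    unfolding ip_def by (rule sum_abs)
  also have "\<dots> \<le> (\<Sum>i<r. ((x i)^2 + (y i)^2) / 2)"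
  proof (rule sum_mono)
    fix i
    have "0 \<le> (\<bar>x i\<bar> - \<bar>y i\<bar>)^2" by simp
    then show "\<bar>x i * y i\<bar> \<le> ((x i)^2 + (y i)^2) / 2"
      by (simp add: power2_eq_square abs_mult algebra_simps)
  qed
  also have "\<dots> = ((\<Sum>i<r. (x i)^2) + (\<Sum>i<r. (y i)^2)) / 2"
    by (simp add: sum.distrib flip: sum_divide_distrib)
  finally show ?thesis .
qed

lemma abs_ip_usphere_le_1: "x \<in> usphere r \<Longrightarrow> y \<in> usphere r \<Longrightarrow> \<bar>ip r x y\<bar> \<le> 1"
  using abs_ip_le[of r x y] unfolding usphere_def by simp

lemma sdp_obj_le_sum_abs:
  assumes "fin_graph V E" and "\<forall>u\<in>V. f u \<in> usphere r"
  shows "sdp_obj r E A f \<le> (\<Sum>(u,v)\<in>edges E. \<bar>A u v\<bar>)"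
  unfolding sdp_obj_def
proof (rule sum_mono, clarify)
  fix u v assume "(u,v) \<in> edges E"
  then have "\<bar>ip r (f u) (f v)\<bar> \<le> 1"
    using assms edges_in_vertices abs_ip_usphere_le_1 by blast
  then have "\<bar>A u v\<bar> * \<bar>ip r (f u) (f v)\<bar> \<le> \<bar>A u v\<bar>"
    by (simp add: mult_left_le)
  then show "A u v * ip r (f u) (f v) \<le> \<bar>A u v\<bar>"
    by (metis abs_ge_self abs_mult order_trans)
qed

definition e0 :: "nat \<Rightarrow> real" where "e0 = (\<lambda>i. if i = 0 then 1 else 0)"

lemma e0_in_usphere:
  assumes "r \<ge> 1" shows "e0 \<in> usphere r"
proof -
  have "(\<Sum>i<r. (e0 i)^2) = 1"
    using assms by (simp add: e0_def power2_eq_square if_distrib[of "\<lambda>x. x * _"] sum.delta cong: if_cong)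
  then show ?thesis using assms unfolding usphere_def by (simp add: e0_def)
qed

lemma ip_e0_e0: "r \<ge> 1 \<Longrightarrow> ip r e0 e0 = 1"
  using e0_in_usphere[of r] unfolding usphere_def ip_def by (simp add: power2_eq_square)

lemma sdp_obj_le_SDP:
  assumes "fin_graph V E" and "\<forall>u\<in>V. f u \<in> usphere r"
  shows "sdp_obj r E A f \<le> SDP r V E A"
  unfolding SDP_eq_Sup_sdp_obj
proof (rule cSup_upper)
  show "sdp_obj r E A f \<in> {sdp_obj r E A f | f. \<forall>u\<in>V. f u \<in> usphere r}"
    using assms(2) by auto
  show "bdd_above {sdp_obj r E A f | f. \<forall>u\<in>V. f u \<in> usphere r}"
    using sdp_obj_le_sum_abs[OF assms(1)] by (intro bdd_aboveI) blast
qed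

lemma SDP_le:
  assumes "r \<ge> 1" and "\<And>f. \<forall>u\<in>V. f u \<in> usphere r \<Longrightarrow> sdp_obj r E A f \<le> B"
  shows "SDP r V E A \<le> B"
  unfolding SDP_eq_Sup_sdp_obj
proof (rule cSup_least)
  show "{sdp_obj r E A f | f. \<forall>u\<in>V. f u \<in> usphere r} \<noteq> {}"
    using e0_in_usphere[OF assms(1)] by auto
qed (use assms(2) in auto)

section \<open>Relaxing the sphere constraint to the ball\<close>

definition sdp_grad :: "(nat \<times> nat) set \<Rightarrow> (nat \<Rightarrow> nat \<Rightarrow> real) \<Rightarrow> (nat \<Rightarrow> nat \<Rightarrow> real) \<Rightarrow> nat \<Rightarrow> nat \<Rightarrow> real"
  where "sdp_grad E A y a = (\<lambda>i. \<Sum>(u,v)\<in>edges E.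
           (if u = a then A u v * y v i else 0) + (if v = a then A u v * y u i else 0))"

text \<open>Since the graph has no loops, the objective is affine in each single vector.\<close>

lemma sdp_obj_fun_upd:
  assumes "fin_graph V E"
  shows "sdp_obj r E A (y(a := z)) = sdp_obj r E A (y(a := (\<lambda>i. 0))) + ip r z (sdp_grad E A y a)"
proof -
  let ?y0 = "y(a := (\<lambda>i. 0))"
  let ?g = "\<lambda>(u,v). \<lambda>i. (if u = a then A u v * y v i else 0) + (if v = a then A u v * y u i else 0)"
  have edge: "A u v * ip r ((y(a := z)) u) ((y(a := z)) v) = A u v * ip r (?y0 u) (?y0 v) + ip r z (?g (u,v))"
    if "(u,v) \<in> edges E" for u v
  proof -
    from that have "u \<noteq> v" unfolding edges_def by auto
    then show ?thesis
      by (cases "u = a"; cases "v = a") (simp_all add: ip_add_right ip_scale_right ip_commute ip_zero_left ip_zero_right)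
  qed
  have "sdp_obj r E A (y(a := z)) = (\<Sum>e\<in>edges E. (case e of (u,v) \<Rightarrow> A u v * ip r (?y0 u) (?y0 v)) + ip r z (?g e))"
    unfolding sdp_obj_def
  proof (rule sum.cong)
    fix e assume "e \<in> edges E"
    then show "(case e of (u,v) \<Rightarrow> A u v * ip r ((y(a := z)) u) ((y(a := z)) v))
             = (case e of (u,v) \<Rightarrow> A u v * ip r (?y0 u) (?y0 v)) + ip r z (?g e)"
      by (cases e) (simp only: prod.case edge)
  qed simp
  also have "\<dots> = sdp_obj r E A ?y0 + ip r z (\<lambda>i. \<Sum>e\<in>edges E. ?g e i)"
    by (simp add: sum.distrib sdp_obj_def ip_sum_right[OF finite_edges[OF assms]])
  finally show ?thesis
    unfolding sdp_grad_def by (simp add: case_prod_beta)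
qed

lemma ip_le_norm:
  assumes "(\<Sum>i<r. (y i)^2) \<le> 1"
  shows "ip r y w \<le> sqrt (\<Sum>i<r. (w i)^2)"
proof (cases "(\<Sum>i<r. (w i)^2) = 0")
  case True
  then have "\<forall>i<r. w i = 0" by (simp add: sum_nonneg_eq_0_iff)
  then show ?thesis unfolding ip_def by simp
next
  case False
  define n where "n = sqrt (\<Sum>i<r. (w i)^2)"
  have n: "n > 0" "n^2 = (\<Sum>i<r. (w i)^2)"
    using False unfolding n_def by (simp_all add: sum_nonneg order.strict_iff_order)
  have "(\<Sum>i<r. (w i / n)^2) = 1"
    using n False by (simp add: power_divide flip: sum_divide_distrib)
  then have "ip r y (\<lambda>i. w i / n) \<le> 1"
    using abs_ip_le[of r y "\<lambda>i. w i / n"] assms by simp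
  moreover have "ip r y w = n * ip r y (\<lambda>i. w i / n)"
    unfolding ip_def using n by (simp add: sum_distrib_left)
  ultimately show ?thesis
    using n unfolding n_def[symmetric] by (simp add: mult_le_cancel_left1)
qed

lemma usphere_attains_norm:
  assumes "r \<ge> 1"
  shows "\<exists>z\<in>usphere r. ip r z w = sqrt (\<Sum>i<r. (w i)^2)"
proof (cases "(\<Sum>i<r. (w i)^2) = 0")
  case True
  then have "w 0 = 0" using assms by (simp add: sum_nonneg_eq_0_iff)
  then have "ip r e0 w = 0"
    unfolding ip_def e0_def by (simp add: if_distrib[of "\<lambda>x. x * _"] cong: if_cong)
  then show ?thesis using True e0_in_usphere[OF assms] by auto
next
  case False
  define n where "n = sqrt (\<Sum>i<r. (w i)^2)"
  have n: "n > 0" "n^2 = (\<Sum>i<r. (w i)^2)"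
    using False unfolding n_def by (simp_all add: sum_nonneg order.strict_iff_order)
  define z where "z = (\<lambda>i. if i < r then w i / n else 0)"
  have "(\<Sum>i<r. (z i)^2) = 1"
    unfolding z_def using n False by (simp add: power_divide flip: sum_divide_distrib)
  then have "z \<in> usphere r" unfolding usphere_def z_def by simp
  moreover have "ip r z w = n"
    unfolding ip_def z_def using n
    by (simp add: power2_eq_square flip: sum_divide_distrib) (metis nonzero_mult_div_cancel_left order_less_irrefl)
  ultimately show ?thesis unfolding n_def by blast
qed

lemma sdp_obj_improve_vertex:
  assumes "fin_graph V E" and "r \<ge> 1" and "(\<Sum>i<r. (y a i)^2) \<le> 1"
  shows "\<exists>z\<in>usphere r. sdp_obj r E A y \<le> sdp_obj r E A (y(a := z))"
proof -
  obtain z where z: "z \<in> usphere r" "ip r z (sdp_grad E A y a) = sqrt (\<Sum>i<r. (sdp_grad E A y a i)^2)"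
    using usphere_attains_norm[OF assms(2)] by blast
  have "ip r (y a) (sdp_grad E A y a) \<le> ip r z (sdp_grad E A y a)"
    using ip_le_norm[OF assms(3)] z(2) by simp
  then have "sdp_obj r E A (y(a := y a)) \<le> sdp_obj r E A (y(a := z))"
    unfolding sdp_obj_fun_upd[OF assms(1), of r A y a "y a"] sdp_obj_fun_upd[OF assms(1), of r A y a z]
    by simp
  then show ?thesis using z(1) by auto
qed

lemma sdp_obj_ball_le_sphere:
  assumes "fin_graph V E" and "r \<ge> 1" and "\<forall>u\<in>V. (\<Sum>i<r. (y u i)^2) \<le> 1"
  shows "\<exists>f. (\<forall>u\<in>V. f u \<in> usphere r) \<and> sdp_obj r E A y \<le> sdp_obj r E A f"
proof -
  have "\<forall>y. (\<forall>u\<in>V. (\<Sum>i<r. (y u i)^2) \<le> 1) \<and> (\<forall>u\<in>V - W. y u \<in> usphere r) \<longrightarrow>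
          (\<exists>f. (\<forall>u\<in>V. f u \<in> usphere r) \<and> sdp_obj r E A y \<le> sdp_obj r E A f)"
    if "finite W" "W \<subseteq> V" for W
    using that
  proof (induction W rule: finite_induct)
    case (insert a W)
    show ?case
    proof (intro allI impI)
      fix y assume y: "(\<forall>u\<in>V. (\<Sum>i<r. (y u i)^2) \<le> 1) \<and> (\<forall>u\<in>V - insert a W. y u \<in> usphere r)"
      obtain z where z: "z \<in> usphere r" "sdp_obj r E A y \<le> sdp_obj r E A (y(a := z))"
        using sdp_obj_improve_vertex[OF assms(1,2)] y insert.prems by blast
      let ?y' = "y(a := z)"
      have "\<forall>u\<in>V. (\<Sum>i<r. (?y' u i)^2) \<le> 1"
        using y z(1) unfolding usphere_def by simp
      moreover have "\<forall>u\<in>V - W. ?y' u \<in> usphere r"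
        using y z(1) by simp
      ultimately obtain f where "\<forall>u\<in>V. f u \<in> usphere r" "sdp_obj r E A ?y' \<le> sdp_obj r E A f"
        using insert.IH insert.prems by blast
      then show "\<exists>f. (\<forall>u\<in>V. f u \<in> usphere r) \<and> sdp_obj r E A y \<le> sdp_obj r E A f"
        using z(2) by (blast intro: order_trans)
    qed
  qed auto
  moreover have "finite V" using assms(1) unfolding fin_graph_def by simp
  ultimately show ?thesis using assms(3) by blast
qed

lemma sdp_obj_scale: "sdp_obj r E A (\<lambda>u i. c * y u i) = c^2 * sdp_obj r E A y"
  unfolding sdp_obj_def ip_def
  by (simp add: sum_distrib_left case_prod_beta power2_eq_square mult_ac)

lemma sdp_obj_le_SDP_scaled:
  assumes "fin_graph V E" and "r \<ge> 1" and "D > 0" and "\<forall>u\<in>V. (\<Sum>i<r. (y u i)^2) \<le> D"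
  shows "sdp_obj r E A y \<le> D * SDP r V E A"
proof -
  define y' where "y' = (\<lambda>u i. y u i / sqrt D)"
  have "\<forall>u\<in>V. (\<Sum>i<r. (y' u i)^2) \<le> 1"
    using assms(3,4) by (simp add: y'_def power_divide flip: sum_divide_distrib)
  then obtain f where "\<forall>u\<in>V. f u \<in> usphere r" "sdp_obj r E A y' \<le> sdp_obj r E A f"
    using sdp_obj_ball_le_sphere[OF assms(1,2)] by blast
  then have "sdp_obj r E A y' \<le> SDP r V E A"
    using sdp_obj_le_SDP[OF assms(1)] order_trans by blast
  moreover have "y = (\<lambda>u i. sqrt D * y' u i)"
    using assms(3) by (simp add: y'_def)
  ultimately show ?thesis
    using assms(3) sdp_obj_scale[of r E A "sqrt D" y'] by (simp add: mult_left_mono)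
qed

section \<open>Positive semidefinite matrices\<close>

definition quad :: "nat set \<Rightarrow> (nat \<Rightarrow> nat \<Rightarrow> real) \<Rightarrow> (nat \<Rightarrow> real) \<Rightarrow> real"
  where "quad V M x = (\<Sum>u\<in>V. \<Sum>v\<in>V. x u * M u v * x v)"

lemma psd_iff_quad: "psd V M \<longleftrightarrow> sym_mat V M \<and> (\<forall>x. quad V M x \<ge> 0)"
  unfolding psd_def quad_def ..

lemma psd_sym: "psd V M \<Longrightarrow> u \<in> V \<Longrightarrow> v \<in> V \<Longrightarrow> M u v = M v u"
  unfolding psd_def sym_mat_def by blast

lemma psd_quad_nonneg: "psd V M \<Longrightarrow> quad V M x \<ge> 0"
  unfolding psd_iff_quad by blast

lemma quad_cong: "(\<And>u. u \<in> V \<Longrightarrow> x u = y u) \<Longrightarrow> quad V M x = quad V M y"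
  unfolding quad_def by (intro sum.cong refl) auto

lemma quad_insert:
  assumes "finite W" and "a \<notin> W"
  shows "quad (insert a W) M x = x a * M a a * x a + (\<Sum>v\<in>W. x a * M a v * x v)
           + (\<Sum>u\<in>W. x u * M u a * x a) + quad W M x"
  unfolding quad_def using assms by (simp add: sum.distrib)

lemma quad_sum_matrix:
  assumes "finite I"
  shows "quad V (\<lambda>u v. \<Sum>k\<in>I. f k u v) x = (\<Sum>k\<in>I. quad V (f k) x)"
  unfolding quad_def sum_distrib_left sum_distrib_right
  by (simp add: sum.swap[of _ I])

lemma psd_cong:
  assumes "\<And>u v. u \<in> V \<Longrightarrow> v \<in> V \<Longrightarrow> M u v = N u v"
  shows "psd V M \<longleftrightarrow> psd V N"
proof -
  have "quad V M = quad V N"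
    unfolding quad_def using assms by (intro ext sum.cong refl) auto
  then show ?thesis
    unfolding psd_iff_quad sym_mat_def using assms by auto
qed

lemma psd_subset:
  assumes "psd V M" and "W \<subseteq> V" and "finite V"
  shows "psd W M"
  unfolding psd_iff_quad
proof (intro conjI allI)
  show "sym_mat W M"
    using assms(1,2) unfolding psd_def sym_mat_def by blast
  fix x :: "nat \<Rightarrow> real"
  let ?x = "\<lambda>u. if u \<in> W then x u else 0"
  have "quad V M ?x = (\<Sum>u\<in>W. \<Sum>v\<in>V. ?x u * M u v * ?x v)"
    unfolding quad_def using assms(2,3) by (intro sum.mono_neutral_right) auto
  also have "\<dots> = quad W M ?x"
    unfolding quad_def using assms(2,3)
    by (intro sum.cong refl sum.mono_neutral_right) (auto intro: finite_subset)
  also have "\<dots> = quad W M x" by (rule quad_cong) simp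
  finally show "quad W M x \<ge> 0"
    using psd_quad_nonneg[OF assms(1), of ?x] by simp
qed

lemma psd_diag_nonneg:
  assumes "psd V M" and "finite V" and "u \<in> V"
  shows "M u u \<ge> 0"
  using psd_quad_nonneg[OF psd_subset[OF assms(1) _ assms(2)], of "{u}" "\<lambda>_. 1"] assms(3)
  by (simp add: quad_def)

lemma psd_zero_diag_row:
  assumes "psd V M" and "finite V" and "a \<in> V" and "v \<in> V" and "M a a = 0"
  shows "M a v = 0"
proof (rule ccontr)
  assume ne: "M a v \<noteq> 0"
  then have "v \<noteq> a" using assms(5) by auto
  define t where "t = - (M v v + 1) / (2 * M a v)"
  have "quad {a,v} M (\<lambda>u. if u = a then t else 1) = 2 * t * M a v + M v v"
    using \<open>v \<noteq> a\<close> assms(5) psd_sym[OF assms(1,3,4)]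
    by (simp add: quad_def algebra_simps)
  also have "\<dots> = -1"
    using ne unfolding t_def by (simp add: field_simps)
  finally show False
    using psd_quad_nonneg[OF psd_subset[OF assms(1) _ assms(2)], of "{a,v}"] assms(3,4)
    by (metis empty_subsetI insert_subset neg_0_le_iff_le not_one_le_zero)
qed

lemma psd_Schur_complement:
  assumes "psd (insert a W) M" and "finite W" and "a \<notin> W" and "M a a > 0"
  shows "psd W (\<lambda>u v. M u v - M u a * M a v / M a a)"
  unfolding psd_iff_quad
proof (intro conjI allI)
  have sym: "M u v = M v u" if "u \<in> insert a W" "v \<in> insert a W" for u v
    using psd_sym[OF assms(1) that] .
  then show "sym_mat W (\<lambda>u v. M u v - M u a * M a v / M a a)"
    unfolding sym_mat_def by (auto simp: mult.commute)
  fix x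
  define s where "s = (\<Sum>v\<in>W. M a v * x v)"
  define x' where "x' = x(a := - s / M a a)"
  have xW: "\<And>u. u \<in> W \<Longrightarrow> x' u = x u"
    unfolding x'_def using assms(3) by auto
  have s_sym: "(\<Sum>u\<in>W. x u * M u a) = s"
    unfolding s_def by (rule sum.cong) (use sym in \<open>auto simp: mult.commute\<close>)
  \<comment> \<open>Minimising over the free coordinate \<open>x a\<close> leaves the Schur complement.\<close>
  have "(\<Sum>v\<in>W. x' a * M a v * x' v) = x' a * s"
    unfolding s_def sum_distrib_left using xW by (intro sum.cong) auto
  moreover have "(\<Sum>u\<in>W. x' u * M u a * x' a) = s * x' a"
    unfolding s_sym[symmetric] sum_distrib_right using xW by (intro sum.cong) auto
  moreover have "quad W M x' = quad W M x"
    using xW by (rule quad_cong)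
  ultimately have "quad (insert a W) M x' = x' a * M a a * x' a + x' a * s + s * x' a + quad W M x"
    unfolding quad_insert[OF assms(2,3)] by simp
  also have "\<dots> = quad W M x - s^2 / M a a"
    using assms(4) by (simp add: x'_def field_simps power2_eq_square)
  also have "s^2 = (\<Sum>u\<in>W. x u * M u a) * (\<Sum>v\<in>W. M a v * x v)"
    by (simp add: power2_eq_square s_sym s_def)
  also have "\<dots> = (\<Sum>u\<in>W. \<Sum>v\<in>W. (x u * M u a) * (M a v * x v))"
    by (rule sum_product)
  also have "quad W M x - \<dots> / M a a = quad W (\<lambda>u v. M u v - M u a * M a v / M a a) x"
    unfolding quad_def by (simp add: algebra_simps sum_subtractf sum_divide_distrib)
  finally show "quad W (\<lambda>u v. M u v - M u a * M a v / M a a) x \<ge> 0"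
    using psd_quad_nonneg[OF assms(1), of x'] by simp
qed

lemma psd_deflate:
  assumes "psd (insert a W) M" and "finite W" and "a \<notin> W"
  obtains c where "psd W (\<lambda>u v. M u v - c u * c v)" and "\<forall>v\<in>insert a W. M a v = c a * c v"
proof (cases "M a a = 0")
  case True
  have "M a v = 0" if "v \<in> insert a W" for v
    using psd_zero_diag_row[OF assms(1) _ _ that True] assms(2) by simp
  moreover have "psd W M"
    using psd_subset[OF assms(1)] assms(2) by auto
  ultimately show ?thesis
    using that[of "\<lambda>_. 0"] by simp
next
  case False
  then have pos: "M a a > 0"
    using psd_diag_nonneg[OF assms(1)] assms(2) by force
  have sym: "M u v = M v u" if "u \<in> insert a W" "v \<in> insert a W" for u v
    using psd_sym[OF assms(1) that] .
  define c where "c = (\<lambda>u. M u a / sqrt (M a a))"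
  have cc: "c u * c v = M u a * M a v / M a a" if "v \<in> insert a W" for u v
    using pos sym[OF that, of a] by (simp add: c_def real_sqrt_mult[symmetric])
  show ?thesis
  proof (rule that)
    show "psd W (\<lambda>u v. M u v - c u * c v)"
      using psd_Schur_complement[OF assms pos] by (subst psd_cong) (auto simp: cc)
    show "\<forall>v\<in>insert a W. M a v = c a * c v"
      using pos by (simp add: cc)
  qed
qed

lemma psd_gram:
  assumes "finite V" and "psd V M"
  obtains g where "\<forall>u\<in>V. \<forall>v\<in>V. M u v = ip (card V) (g u) (g v)"
  using assms
proof (induction V arbitrary: M thesis rule: finite_induct)
  case empty
  then show ?case by simp
next
  case (insert a W)
  obtain c where c: "psd W (\<lambda>u v. M u v - c u * c v)" "\<forall>v\<in>insert a W. M a v = c a * c v"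
    using psd_deflate[OF insert.prems(2) insert.hyps] by blast
  obtain g where g: "\<forall>u\<in>W. \<forall>v\<in>W. M u v - c u * c v = ip (card W) (g u) (g v)"
    using insert.IH[OF _ c(1)] by blast
  let ?n = "card W"
  \<comment> \<open>Cholesky step: the new vertex \<open>a\<close> lives on the new coordinate \<open>?n\<close>, where every \<open>u\<close> gets \<open>c u\<close>.\<close>
  define g' where "g' = (\<lambda>u. if u = a then (\<lambda>i. if i = ?n then c a else 0) else (g u)(?n := c u))"
  have ip_Suc: "ip (Suc ?n) x y = ip ?n x y + x ?n * y ?n" for x y
    unfolding ip_def by simp
  have ip_g': "ip ?n (g' u) (g' v) = (if u = a \<or> v = a then 0 else ip ?n (g u) (g v))" for u v
    unfolding ip_def g'_def by (auto intro!: sum.cong)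
  have "M u v = ip (Suc ?n) (g' u) (g' v)" if "u \<in> insert a W" "v \<in> insert a W" for u v
  proof -
    have "M u v = M v u" using psd_sym[OF insert.prems(2) that] .
    then show ?thesis
      using that g c(2) insert.hyps(2) unfolding ip_Suc ip_g'
      by (auto simp: g'_def mult.commute) (metis diff_eq_eq)
  qed
  moreover have "card (insert a W) = Suc ?n"
    using insert.hyps by simp
  ultimately show ?case
    by (intro insert.prems(1)[of g']) simp
qed

lemma psd_edge_sum_le_SDP_inf:
  assumes "fin_graph V E" and "V \<noteq> {}" and "psd V M" and "D > 0" and "\<forall>u\<in>V. M u u \<le> D"
  shows "(\<Sum>(u,v)\<in>edges E. A u v * M u v) \<le> D * SDP_inf V E A"
proof -
  have fin: "finite V" using assms(1) unfolding fin_graph_def by simp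
  then have n: "card V \<ge> 1" using assms(2) by (simp add: Suc_le_eq card_gt_0_iff)
  obtain g where g: "\<forall>u\<in>V. \<forall>v\<in>V. M u v = ip (card V) (g u) (g v)"
    using psd_gram[OF fin assms(3)] by blast
  have "\<forall>u\<in>V. (\<Sum>i<card V. (g u i)^2) \<le> D"
    using g assms(5) by (simp add: ip_def power2_eq_square)
  then have "sdp_obj (card V) E A g \<le> D * SDP (card V) V E A"
    by (rule sdp_obj_le_SDP_scaled[OF assms(1) n assms(4)])
  moreover have "sdp_obj (card V) E A g = (\<Sum>(u,v)\<in>edges E. A u v * M u v)"
    unfolding sdp_obj_def using g edges_in_vertices[OF assms(1)] by (intro sum.cong) auto
  ultimately show ?thesis unfolding SDP_inf_def by simp
qed

lemma psd_add: "psd V M \<Longrightarrow> psd V N \<Longrightarrow> psd V (\<lambda>u v. M u v + N u v)"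
  unfolding psd_iff_quad sym_mat_def quad_def
  by (simp add: algebra_simps sum.distrib add_nonneg_nonneg)

lemma psd_gram_matrix:
  assumes "finite I"
  shows "psd V (\<lambda>u v. \<Sum>k\<in>I. p u k * p v k)"
  unfolding psd_iff_quad
proof (intro conjI allI)
  show "sym_mat V (\<lambda>u v. \<Sum>k\<in>I. p u k * p v k)"
    unfolding sym_mat_def by (simp add: mult.commute)
  fix x
  have "quad V (\<lambda>u v. p u k * p v k) x = (\<Sum>u\<in>V. x u * p u k)^2" for k
    unfolding quad_def by (simp add: power2_eq_square sum_product mult_ac)
  then show "quad V (\<lambda>u v. \<Sum>k\<in>I. p u k * p v k) x \<ge> 0"
    by (simp add: quad_sum_matrix[OF assms] sum_nonneg)
qed

lemma psd_mult_gram_matrix: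
  assumes "finite I" and "psd V Z"
  shows "psd V (\<lambda>u v. Z u v * (\<Sum>k\<in>I. q u k * q v k))"
  unfolding psd_iff_quad
proof (intro conjI allI)
  show "sym_mat V (\<lambda>u v. Z u v * (\<Sum>k\<in>I. q u k * q v k))"
    using psd_sym[OF assms(2)] unfolding sym_mat_def by (simp add: mult.commute)
  fix x
  have "quad V (\<lambda>u v. Z u v * (q u k * q v k)) x = quad V Z (\<lambda>u. x u * q u k)" for k
    unfolding quad_def by (simp add: mult_ac)
  then show "quad V (\<lambda>u v. Z u v * (\<Sum>k\<in>I. q u k * q v k)) x \<ge> 0"
    using psd_quad_nonneg[OF assms(2)]
    by (simp add: sum_distrib_left quad_sum_matrix[OF assms(1)] sum_nonneg)
qed

section \<open>The theta trick\<close>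

lemma theta_witness_edge_sum_le:
  assumes "fin_graph V E" and "V \<noteq> {}" and "psd V Z" and "\<forall>(u,v)\<in>E. Z u v = -1"
    and "\<forall>u\<in>V. Z u u = lam - 1" and "finite I" and "D > 0"
    and "\<forall>u\<in>V. (\<Sum>k\<in>I. (p u k)^2) + (lam - 1) * (\<Sum>k\<in>I. (q u k)^2) \<le> D"
  shows "(\<Sum>(u,v)\<in>edges E. A u v * (\<Sum>k\<in>I. p u k * p v k - q u k * q v k)) \<le> D * SDP_inf V E A"
proof -
  define M where "M = (\<lambda>u v. (\<Sum>k\<in>I. p u k * p v k) + Z u v * (\<Sum>k\<in>I. q u k * q v k))"
  have "psd V M"
    unfolding M_def by (intro psd_add psd_gram_matrix psd_mult_gram_matrix assms(3,6))
  moreover have "\<forall>u\<in>V. M u u \<le> D"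
    using assms(5,8) by (simp add: M_def power2_eq_square)
  moreover have "M u v = (\<Sum>k\<in>I. p u k * p v k - q u k * q v k)" if "(u,v) \<in> edges E" for u v
    using that assms(4) unfolding M_def edges_def by (auto simp: sum_subtractf)
  then have "(\<Sum>(u,v)\<in>edges E. A u v * (\<Sum>k\<in>I. p u k * p v k - q u k * q v k))
           = (\<Sum>(u,v)\<in>edges E. A u v * M u v)"
    by (intro sum.cong) auto
  ultimately show ?thesis
    using psd_edge_sum_le_SDP_inf[OF assms(1,2) _ assms(7)] by simp
qed

lemma sum_square_add_le:
  "(\<Sum>k\<in>I. ((x k + y k)::real)^2) \<le> 2 * (\<Sum>k\<in>I. (x k)^2) + 2 * (\<Sum>k\<in>I. (y k)^2)"
proof -
  have "(x k + y k)^2 \<le> 2 * (x k)^2 + 2 * (y k)^2" for k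
    using zero_le_power2[of "x k - y k"] by (simp add: power2_eq_square algebra_simps)
  then have "(\<Sum>k\<in>I. (x k + y k)^2) \<le> (\<Sum>k\<in>I. 2 * (x k)^2 + 2 * (y k)^2)"
    by (rule sum_mono)
  then show ?thesis
    by (simp add: sum.distrib sum_distrib_left)
qed

lemma polarization_sum_square_le:
  fixes a c :: "'i \<Rightarrow> real"
  assumes "lam \<ge> 1" and "\<epsilon>^2 = 1"
    and "(\<Sum>k\<in>I. (a k)^2) \<le> 1" and "(\<Sum>k\<in>I. (c k)^2) \<le> 1"
    and "(\<Sum>k\<in>I. (a k - c k)^2) \<le> 1 / (100 * lam^2)"
  shows "(\<Sum>k\<in>I. (sqrt (10 * lam) * (a k - c k) + \<epsilon> * ((a k + c k) / sqrt (10 * lam)))^2) \<le> 1 / lam"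
proof -
  define \<tau> where "\<tau> = sqrt (10 * lam)"
  have \<tau>: "\<tau> > 0" "\<tau>^2 = 10 * lam"
    unfolding \<tau>_def using assms(1) by simp_all
  have "(\<Sum>k\<in>I. (a k + c k)^2) \<le> 4"
    using sum_square_add_le[of a c I] assms(3,4) by linarith
  then have "(\<Sum>k\<in>I. (\<epsilon> * ((a k + c k) / \<tau>))^2) \<le> 4 / (10 * lam)"
    using \<tau> assms(1,2) by (simp add: power_mult_distrib power_divide flip: sum_divide_distrib)
      (simp add: field_simps)
  moreover have "(\<Sum>k\<in>I. (\<tau> * (a k - c k))^2) \<le> 10 * lam * (1 / (100 * lam^2))"
    using \<tau> assms(1,5) mult_left_mono[of _ "1 / (100 * lam^2)" "10 * lam"]
    by (simp add: power_mult_distrib flip: sum_distrib_left)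
  moreover have "2 * (10 * lam * (1 / (100 * lam^2))) + 2 * (4 / (10 * lam)) = 1 / lam"
    using assms(1) by (simp add: field_simps power2_eq_square)
  ultimately show ?thesis
    using sum_square_add_le[of "\<lambda>k. \<tau> * (a k - c k)" "\<lambda>k. \<epsilon> * ((a k + c k) / \<tau>)" I]
    unfolding \<tau>_def[symmetric] by linarith
qed

lemma theta_witness_close_vectors:
  assumes "fin_graph V E" and "V \<noteq> {}" and "psd V Z" and "\<forall>(u,v)\<in>E. Z u v = -1"
    and "\<forall>u\<in>V. Z u u = lam - 1" and "lam \<ge> 1" and "finite I"
    and a: "\<forall>u\<in>V. (\<Sum>k\<in>I. (a u k)^2) \<le> 1" and c: "\<forall>u\<in>V. (\<Sum>k\<in>I. (c u k)^2) \<le> 1"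
    and close: "\<forall>u\<in>V. (\<Sum>k\<in>I. (a u k - c u k)^2) \<le> 1 / (100 * lam^2)"
  shows "(\<Sum>(u,v)\<in>edges E. A u v * (\<Sum>k\<in>I. a u k * a v k - c u k * c v k)) \<le> SDP_inf V E A / 4"
proof -
  \<comment> \<open>Polarisation: \<open>p\<cdot>p' - q\<cdot>q' = 4 (a\<cdot>a' - c\<cdot>c')\<close>, and \<open>\<tau>\<^sup>2 = 10 \<lambda>\<close> makes \<open>|p|\<^sup>2, |q|\<^sup>2 \<le> 1/\<lambda>\<close>.\<close>
  define \<tau> where "\<tau> = sqrt (10 * lam)"
  define p where "p = (\<lambda>u k. \<tau> * (a u k - c u k) + 1 * ((a u k + c u k) / \<tau>))"
  define q where "q = (\<lambda>u k. \<tau> * (a u k - c u k) + -1 * ((a u k + c u k) / \<tau>))"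
  have "\<tau> > 0"
    unfolding \<tau>_def using assms(6) by simp
  then have pq: "p u k * p v k - q u k * q v k = 4 * (a u k * a v k - c u k * c v k)" for u v k
    unfolding p_def q_def by (simp add: field_simps)
  have "\<forall>u\<in>V. (\<Sum>k\<in>I. (p u k)^2) + (lam - 1) * (\<Sum>k\<in>I. (q u k)^2) \<le> 1"
  proof
    fix u assume u: "u \<in> V"
    have "(\<Sum>k\<in>I. (p u k)^2) \<le> 1 / lam" and "(\<Sum>k\<in>I. (q u k)^2) \<le> 1 / lam"
      unfolding p_def q_def \<tau>_def using a c close u assms(6)
      by (intro polarization_sum_square_le; simp)+
    then have "(\<Sum>k\<in>I. (p u k)^2) + (lam - 1) * (\<Sum>k\<in>I. (q u k)^2) \<le> 1 / lam + (lam - 1) * (1 / lam)"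
      using assms(6) by (intro add_mono mult_left_mono) auto
    also have "\<dots> = 1"
      using assms(6) by (simp add: field_simps)
    finally show "(\<Sum>k\<in>I. (p u k)^2) + (lam - 1) * (\<Sum>k\<in>I. (q u k)^2) \<le> 1" .
  qed
  then have "(\<Sum>(u,v)\<in>edges E. A u v * (\<Sum>k\<in>I. p u k * p v k - q u k * q v k)) \<le> 1 * SDP_inf V E A"
    by (intro theta_witness_edge_sum_le[OF assms(1-5,7)]) simp_all
  moreover have "(\<Sum>(u,v)\<in>edges E. A u v * (\<Sum>k\<in>I. p u k * p v k - q u k * q v k))
      = 4 * (\<Sum>(u,v)\<in>edges E. A u v * (\<Sum>k\<in>I. a u k * a v k - c u k * c v k))"
    unfolding pq by (simp add: sum_distrib_left case_prod_beta algebra_simps)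
  ultimately show ?thesis by simp
qed

section \<open>Moments of Rademacher sums\<close>

lemma power2_mult_fact_le_fact_double: "2^n * fact n \<le> (fact (2*n) :: real)"
proof (induction n)
  case (Suc n)
  have "fact (2 * Suc n) = (of_nat (2*n+2) * of_nat (2*n+1)) * (fact (2*n) :: real)"
    by (simp add: fact_Suc algebra_simps numeral_eq_Suc)
  also have "\<dots> \<ge> (2 * of_nat (Suc n)) * (2^n * fact n)"
    by (rule mult_mono) (use Suc.IH in auto)
  finally show ?case by (simp add: fact_Suc algebra_simps)
qed simp

lemma fact_add_le: "fact (k + m) \<le> fact k * (of_nat (k + m) :: real)^m"
proof (induction m)
  case (Suc m)
  have "fact (k + Suc m) = of_nat (k + Suc m) * (fact (k + m) :: real)"
    by (simp add: fact_Suc)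
  also have "\<dots> \<le> of_nat (k + Suc m) * (fact k * (of_nat (k + m))^m)"
    by (rule mult_left_mono) (use Suc.IH in auto)
  also have "\<dots> \<le> of_nat (k + Suc m) * (fact k * (of_nat (k + Suc m))^m)"
    by (intro mult_left_mono power_mono) auto
  finally show ?case by (simp add: algebra_simps)
qed simp

lemma sums_cosh: "(\<lambda>n. y^(2*n) / fact (2*n)) sums cosh (y::real)"
proof -
  let ?a = "\<lambda>m. if even m then y^m /\<^sub>R fact m else 0"
  have "(\<lambda>n. ?a (2*n)) sums cosh y \<longleftrightarrow> ?a sums cosh y"
  proof (rule sums_mono_reindex)
    show "strict_mono (\<lambda>n::nat. 2*n)" by (rule strict_monoI) simp
    fix n :: nat assume "n \<notin> range (\<lambda>n. 2*n)"
    then show "?a n = 0" by (metis evenE rangeI)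
  qed
  moreover have "(\<lambda>n. ?a (2*n)) = (\<lambda>n. y^(2*n) / fact (2*n))"
    by (simp add: field_simps)
  ultimately show ?thesis
    using cosh_converges[of y] by simp
qed

lemma cosh_le_exp_square_half: "cosh (y::real) \<le> exp (y^2/2)"
proof (rule sums_le[OF _ sums_cosh])
  have "(\<lambda>n. (y^2/2)^n /\<^sub>R fact n) = (\<lambda>n. (y^2/2)^n / fact n)"
    by (simp add: field_simps)
  then show "(\<lambda>n. (y^2/2)^n / fact n) sums exp (y^2/2)"
    using exp_converges[of "y^2/2"] by simp
  fix n
  have "(y^2)^n / fact (2*n) \<le> (y^2)^n / (2^n * fact n)"
    by (rule divide_left_mono) (use power2_mult_fact_le_fact_double[of n] in auto)
  then show "y^(2*n) / fact (2*n) \<le> (y^2/2)^n / fact n"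
    by (simp add: power_mult power_divide)
qed

lemma even_power_div_fact_le_cosh: "y^(2*k) / fact (2*k) \<le> cosh (y::real)"
proof -
  have nonneg: "0 \<le> y^(2*n) / fact (2*n)" for n
    by (simp add: power_mult)
  have "y^(2*k) / fact (2*k) \<le> (\<Sum>n<Suc k. y^(2*n) / fact (2*n))"
    using nonneg by (simp add: sum_nonneg)
  also have "\<dots> \<le> (\<Sum>n. y^(2*n) / fact (2*n))"
    using sums_cosh nonneg by (intro sum_le_suminf) (auto dest: sums_summable)
  also have "\<dots> = cosh y"
    using sums_cosh sums_unique by metis
  finally show ?thesis .
qed

text \<open>Expectations over uniformly random sign vectors are written as sums over \<open>signs N\<close>,
  i.e. \<open>2\<^sup>N\<close> times the expectation.\<close>

definition signs :: "nat \<Rightarrow> (nat \<Rightarrow> real) set"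
  where "signs N = PiE {..<N} (\<lambda>_. {-1, 1})"

definition sign_sum :: "nat \<Rightarrow> (nat \<Rightarrow> real) \<Rightarrow> (nat \<Rightarrow> real) \<Rightarrow> real"
  where "sign_sum N \<sigma> x = (\<Sum>j<N. \<sigma> j * x j)"

lemma card_signs: "card (signs N) = 2^N"
  unfolding signs_def by (simp add: card_PiE numeral_2_eq_2)

lemma finite_signs: "finite (signs N)"
  unfolding signs_def by (simp add: finite_PiE)

lemma sum_signs_prod:
  "(\<Sum>\<sigma>\<in>signs N. \<Prod>j<N. f j (\<sigma> j)) = (\<Prod>j<N. f j 1 + f j (-1 :: real) :: real)"
  unfolding signs_def using prod_sum_PiE[of "{..<N}" "\<lambda>_. {-1, 1::real}" f] by (simp add: add.commute)

lemma sum_signs_exp_le: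
  assumes "(\<Sum>j<N. (x j)^2) \<le> 1"
  shows "(\<Sum>\<sigma>\<in>signs N. exp (l * sign_sum N \<sigma> x)) \<le> 2^N * exp (l^2/2)"
proof -
  have "(\<Sum>\<sigma>\<in>signs N. exp (l * sign_sum N \<sigma> x)) = (\<Sum>\<sigma>\<in>signs N. \<Prod>j<N. exp (l * x j * \<sigma> j))"
    unfolding sign_sum_def sum_distrib_left by (simp add: exp_sum mult_ac)
  also have "\<dots> = (\<Prod>j<N. exp (l * x j * 1) + exp (l * x j * (-1)))"
    by (rule sum_signs_prod)
  also have "\<dots> = (\<Prod>j<N. 2 * cosh (l * x j))"
    by (rule prod.cong) (simp_all add: cosh_def)
  also have "\<dots> \<le> (\<Prod>j<N. 2 * exp ((l * x j)^2/2))"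
    using cosh_le_exp_square_half cosh_real_pos by (intro prod_mono) (simp add: less_imp_le)
  also have "\<dots> = 2^N * exp (l^2/2 * (\<Sum>j<N. (x j)^2))"
    by (simp add: prod.distrib exp_sum sum_distrib_left power_mult_distrib)
  also have "\<dots> \<le> 2^N * exp (l^2/2)"
    using assms by (simp add: mult_left_le)
  finally show ?thesis .
qed

lemma sum_signs_power_le:
  assumes x: "(\<Sum>j<N. (x j)^2) \<le> 1" and k: "k \<ge> 1"
  shows "(\<Sum>\<sigma>\<in>signs N. (sign_sum N \<sigma> x)^(2*k)) \<le> fact k * 2^N * exp 1 ^ k"
proof -
  \<comment> \<open>Compare each even power with \<open>cosh\<close> at the scale \<open>l = \<surd>(2k)\<close>, the optimal one.\<close>
  define l where "l = sqrt (2 * real k)"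
  have l: "l^2 = 2 * real k" "l^(2*k) = (2 * real k)^k" "l^(2*k) > 0"
    using k by (simp_all add: l_def power_mult)
  have "l^(2*k) * (\<Sum>\<sigma>\<in>signs N. (sign_sum N \<sigma> x)^(2*k)) = (\<Sum>\<sigma>\<in>signs N. (l * sign_sum N \<sigma> x)^(2*k))"
    by (simp add: power_mult_distrib sum_distrib_left)
  also have "\<dots> \<le> (\<Sum>\<sigma>\<in>signs N. fact (2*k) * cosh (l * sign_sum N \<sigma> x))"
    using even_power_div_fact_le_cosh[of "l * sign_sum N _ x" k]
    by (intro sum_mono) (simp add: divide_le_eq mult.commute)
  also have "\<dots> = fact (2*k) * ((\<Sum>\<sigma>\<in>signs N. exp (l * sign_sum N \<sigma> x))
                               + (\<Sum>\<sigma>\<in>signs N. exp ((-l) * sign_sum N \<sigma> x))) / 2"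
    unfolding cosh_def by (simp add: sum.distrib flip: sum_distrib_left sum_divide_distrib)
  also have "\<dots> \<le> fact (2*k) * (2^N * exp (l^2/2) + 2^N * exp ((-l)^2/2)) / 2"
    by (intro divide_right_mono mult_left_mono add_mono sum_signs_exp_le x) auto
  also have "\<dots> = fact (k + k) * 2^N * exp 1 ^ k"
  proof -
    have "exp (l^2/2) = exp (real k * 1)"
      using l(1) by simp
    also have "\<dots> = exp 1 ^ k"
      by (rule exp_of_nat_mult)
    finally show ?thesis by (simp add: mult_2[of k])
  qed
  also have "\<dots> \<le> l^(2*k) * (fact k * 2^N * exp 1 ^ k)"
  proof -
    have double: "(of_nat (k + k) :: real) = 2 * real k"
      by simp
    have "fact (k + k) \<le> fact k * (2 * real k)^k"
      using fact_add_le[of k k] unfolding double .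
    then show ?thesis
      unfolding l(2) by (simp add: mult_right_mono mult_ac)
  qed
  finally have "l^(2*k) * (\<Sum>\<sigma>\<in>signs N. (sign_sum N \<sigma> x)^(2*k)) \<le> l^(2*k) * (fact k * 2^N * exp 1 ^ k)" .
  then show ?thesis
    using l(3) by simp
qed

lemma sum_signs_exp_square_le:
  assumes x: "(\<Sum>j<N. (x j)^2) \<le> 1" and t: "t \<ge> 0" "t * exp 1 < 1"
  shows "(\<Sum>\<sigma>\<in>signs N. exp (t * (sign_sum N \<sigma> x)^2)) \<le> 2^N / (1 - t * exp 1)"
proof -
  define a where "a = (\<lambda>\<sigma> k. (t * (sign_sum N \<sigma> x)^2)^k / fact k)"
  have sums_a: "a \<sigma> sums exp (t * (sign_sum N \<sigma> x)^2)" for \<sigma>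
    using exp_converges[of "t * (sign_sum N \<sigma> x)^2"] unfolding a_def by (simp add: field_simps)
  have "(\<Sum>\<sigma>\<in>signs N. exp (t * (sign_sum N \<sigma> x)^2)) = (\<Sum>k. \<Sum>\<sigma>\<in>signs N. a \<sigma> k)"
    using sums_a by (subst suminf_sum) (auto simp: sums_iff)
  also have "\<dots> \<le> (\<Sum>k. 2^N * (t * exp 1)^k)"
  proof (rule suminf_le)
    show "(\<Sum>\<sigma>\<in>signs N. a \<sigma> k) \<le> 2^N * (t * exp 1)^k" for k
    proof (cases "k = 0")
      case False
      have "(\<Sum>\<sigma>\<in>signs N. a \<sigma> k) = t^k * (\<Sum>\<sigma>\<in>signs N. (sign_sum N \<sigma> x)^(2*k)) / fact k"
        unfolding a_def by (simp add: power_mult_distrib power_mult sum_distrib_left sum_divide_distrib)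
      also have "\<dots> \<le> t^k * (fact k * 2^N * exp 1 ^ k) / fact k"
        using False t by (intro divide_right_mono mult_left_mono sum_signs_power_le x) auto
      also have "\<dots> = 2^N * (t * exp 1)^k"
        by (simp add: power_mult_distrib)
      finally show ?thesis .
    qed (simp add: a_def card_signs)
    show "summable (\<lambda>k. \<Sum>\<sigma>\<in>signs N. a \<sigma> k)"
      using sums_a by (intro summable_sum) (auto dest: sums_summable)
    show "summable (\<lambda>k. 2^N * (t * exp 1)^k :: real)"
      using t by (intro summable_mult summable_geometric) simp
  qed
  also have "\<dots> = 2^N / (1 - t * exp 1)"
    using t by (subst suminf_mult) (simp_all add: summable_geometric suminf_geometric)
  finally show ?thesis .
qed

lemma sum_signs_pair:
  assumes "j < N" and "j' < N"
  shows "(\<Sum>\<sigma>\<in>signs N. \<sigma> j * \<sigma> j') = (if j = j' then 2^N else 0)"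
proof -
  define f where "f = (\<lambda>l (s::real). (if l = j then s else 1) * (if l = j' then s else 1))"
  have "(\<Sum>\<sigma>\<in>signs N. \<sigma> j * \<sigma> j') = (\<Sum>\<sigma>\<in>signs N. \<Prod>l<N. f l (\<sigma> l))"
    unfolding f_def prod.distrib using assms by simp
  also have "\<dots> = (\<Prod>l<N. f l 1 + f l (-1))"
    by (rule sum_signs_prod)
  also have "\<dots> = (if j = j' then 2^N else 0)"
  proof (cases "j = j'")
    case False
    then have "f j 1 + f j (-1) = 0" by (simp add: f_def)
    then show ?thesis using False assms by (auto intro: prod_zero)
  next
    case True
    then have "f l 1 + f l (-1) = 2" for l by (simp add: f_def)
    then show ?thesis using True by simp
  qed
  finally show ?thesis .
qed

lemma sum_signs_sign_sum_mult: "(\<Sum>\<sigma>\<in>signs N. sign_sum N \<sigma> x * sign_sum N \<sigma> y) = 2^N * ip N x y"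
proof -
  have "(\<Sum>\<sigma>\<in>signs N. sign_sum N \<sigma> x * sign_sum N \<sigma> y)
      = (\<Sum>\<sigma>\<in>signs N. \<Sum>j<N. \<Sum>j'<N. x j * y j' * (\<sigma> j * \<sigma> j'))"
    unfolding sign_sum_def sum_product by (simp add: mult_ac)
  also have "\<dots> = (\<Sum>j<N. \<Sum>j'<N. x j * y j' * (\<Sum>\<sigma>\<in>signs N. \<sigma> j * \<sigma> j'))"
    unfolding sum_distrib_left by (subst sum.swap, rule sum.cong, simp, subst sum.swap, simp)
  also have "\<dots> = (\<Sum>j<N. \<Sum>j'<N. x j * y j' * (if j = j' then 2^N else 0))"
    by (intro sum.cong refl) (simp add: sum_signs_pair)
  also have "\<dots> = (\<Sum>j<N. x j * y j * 2^N)"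
    by (rule sum.cong) (simp_all add: if_distrib cong: if_cong)
  also have "\<dots> = 2^N * ip N x y"
    unfolding ip_def by (simp add: sum_distrib_left mult_ac)
  finally show ?thesis .
qed

section \<open>Random projections by sign matrices\<close>

definition sign_frames :: "nat \<Rightarrow> nat \<Rightarrow> (nat \<Rightarrow> nat \<Rightarrow> real) set"
  where "sign_frames r N = PiE {..<r} (\<lambda>_. signs N)"

definition proj_norm2 :: "nat \<Rightarrow> nat \<Rightarrow> (nat \<Rightarrow> nat \<Rightarrow> real) \<Rightarrow> (nat \<Rightarrow> real) \<Rightarrow> real"
  where "proj_norm2 r N \<omega> x = (\<Sum>i<r. (sign_sum N (\<omega> i) x)^2)"

lemma card_sign_frames: "card (sign_frames r N) = (2^N)^r"
  unfolding sign_frames_def by (simp add: card_PiE card_signs)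

lemma finite_sign_frames: "finite (sign_frames r N)"
  unfolding sign_frames_def by (simp add: finite_PiE finite_signs)

lemma sum_sign_frames_prod:
  "(\<Sum>\<omega>\<in>sign_frames r N. \<Prod>i<r. f i (\<omega> i)) = (\<Prod>i<r. \<Sum>\<sigma>\<in>signs N. f i \<sigma> :: real)"
  unfolding sign_frames_def using prod_sum_PiE[of "{..<r}" "\<lambda>_. signs N" f] finite_signs by simp

lemma sum_sign_frames_coord:
  fixes h :: "(nat \<Rightarrow> real) \<Rightarrow> real"
  assumes "i < r"
  shows "(\<Sum>\<omega>\<in>sign_frames r N. h (\<omega> i)) = (\<Sum>\<sigma>\<in>signs N. h \<sigma>) * (2^N)^(r - 1)"
proof -
  define f where "f = (\<lambda>l \<sigma>. if l = i then h \<sigma> else (1::real))"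
  have "(\<Sum>\<omega>\<in>sign_frames r N. h (\<omega> i)) = (\<Sum>\<omega>\<in>sign_frames r N. \<Prod>l<r. f l (\<omega> l))"
    unfolding f_def using assms by (simp add: if_distrib cong: if_cong)
  also have "\<dots> = (\<Prod>l<r. \<Sum>\<sigma>\<in>signs N. f l \<sigma>)"
    by (rule sum_sign_frames_prod)
  also have "\<dots> = (\<Prod>l<r. if l = i then (\<Sum>\<sigma>\<in>signs N. h \<sigma>) else 2^N)"
    by (rule prod.cong) (simp_all add: f_def card_signs)
  also have "\<dots> = (\<Sum>\<sigma>\<in>signs N. h \<sigma>) * (\<Prod>l\<in>{..<r} - {i}. 2^N)"
    using assms by (subst prod.remove[of _ i]) (auto intro!: prod.cong)
  also have "(\<Prod>l\<in>{..<r} - {i}. (2::real)^N) = (2^N)^(r - 1)"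
    using assms by (simp add: card_Diff_singleton)
  finally show ?thesis .
qed

lemma sum_sign_frames_ip:
  assumes "r \<ge> 1"
  shows "(\<Sum>\<omega>\<in>sign_frames r N. \<Sum>i<r. sign_sum N (\<omega> i) x * sign_sum N (\<omega> i) y)
           = real r * (2^N)^r * ip N x y"
proof -
  have "(\<Sum>\<omega>\<in>sign_frames r N. \<Sum>i<r. sign_sum N (\<omega> i) x * sign_sum N (\<omega> i) y)
      = (\<Sum>i<r. 2^N * ip N x y * (2^N)^(r - 1))"
    using sum_sign_frames_coord[where h = "\<lambda>\<sigma>. sign_sum N \<sigma> x * sign_sum N \<sigma> y"]
    by (subst sum.swap, intro sum.cong) (simp_all add: sum_signs_sign_sum_mult)
  also have "\<dots> = real r * (2^N)^r * ip N x y"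
    using assms by (simp add: power_eq_if[of "2^N" r])
  finally show ?thesis .
qed

lemma sum_sign_frames_exp_le:
  assumes "(\<Sum>j<N. (x j)^2) \<le> 1"
  shows "(\<Sum>\<omega>\<in>sign_frames r N. exp (proj_norm2 r N \<omega> x / 6)) \<le> (2^N * 2)^r"
proof -
  have "(\<Sum>\<omega>\<in>sign_frames r N. exp (proj_norm2 r N \<omega> x / 6))
      = (\<Prod>i<r. \<Sum>\<sigma>\<in>signs N. exp ((1/6) * (sign_sum N \<sigma> x)^2))"
    unfolding proj_norm2_def sum_sign_frames_prod[symmetric]
    by (simp add: exp_sum sum_divide_distrib)
  also have "\<dots> \<le> (\<Prod>i<r. 2^N * 2)"
  proof (rule prod_mono)
    have "(\<Sum>\<sigma>\<in>signs N. exp ((1/6) * (sign_sum N \<sigma> x)^2)) \<le> 2^N / (1 - (1/6) * exp 1)"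
      using exp_le by (intro sum_signs_exp_square_le[OF assms]) simp_all
    also have "\<dots> \<le> 2^N * 2"
      using exp_le by (simp add: divide_le_eq)
    finally have "(\<Sum>\<sigma>\<in>signs N. exp ((1/6) * (sign_sum N \<sigma> x)^2)) \<le> 2^N * 2" .
    then show "0 \<le> (\<Sum>\<sigma>\<in>signs N. exp ((1/6) * (sign_sum N \<sigma> x)^2))
                \<and> (\<Sum>\<sigma>\<in>signs N. exp ((1/6) * (sign_sum N \<sigma> x)^2)) \<le> 2^N * 2"
      by (simp add: sum_nonneg)
  qed
  finally show ?thesis by simp
qed

lemma le_exp_tail:
  fixes t y R :: real
  assumes "t > 0" and "R \<ge> 0" and "y > R"
  shows "y \<le> (2/t) * exp (- t * R / 2) * exp (t * y)"
proof -
  have "t * y / 2 \<le> exp (t * y / 2)"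
    using exp_ge_add_one_self[of "t * y / 2"] by linarith
  moreover have "1 \<le> exp (t * y / 2) * exp (- t * R / 2)"
    using assms by (simp add: mult_less_cancel_left_pos flip: exp_add)
  ultimately have "(2/t) * (t * y / 2) * 1 \<le> (2/t) * exp (t * y / 2) * (exp (t * y / 2) * exp (- t * R / 2))"
    using assms by (intro mult_mono) auto
  also have "\<dots> = (2/t) * exp (- t * R / 2) * exp (t * y)"
    by (simp add: algebra_simps flip: exp_add)
  finally show ?thesis
    using assms(1) by simp
qed

lemma sum_sign_frames_tail_le:
  assumes "(\<Sum>j<N. (x j)^2) \<le> 1" and "R \<ge> 0"
  shows "(\<Sum>\<omega>\<in>sign_frames r N. if proj_norm2 r N \<omega> x > R then proj_norm2 r N \<omega> x else 0)
           \<le> 12 * exp (- R / 12) * (2^N * 2)^r"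
proof -
  have "(\<Sum>\<omega>\<in>sign_frames r N. if proj_norm2 r N \<omega> x > R then proj_norm2 r N \<omega> x else 0)
      \<le> (\<Sum>\<omega>\<in>sign_frames r N. 12 * exp (- R / 12) * exp (proj_norm2 r N \<omega> x / 6))"
    using le_exp_tail[of "1/6" R] assms(2) by (intro sum_mono) auto
  also have "\<dots> \<le> 12 * exp (- R / 12) * (2^N * 2)^r"
    using sum_sign_frames_exp_le[OF assms(1)] by (simp add: mult_left_mono flip: sum_distrib_left)
  finally show ?thesis .
qed

section \<open>Rounding an optimal solution to dimension \<open>r\<close>\<close>

definition trunc_factor :: "real \<Rightarrow> real \<Rightarrow> real"
  where "trunc_factor R t = (if t \<le> R then 1 else sqrt R / sqrt t)"

lemma trunc_factor_bounds: "R > 0 \<Longrightarrow> 0 \<le> trunc_factor R t \<and> trunc_factor R t \<le> 1"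
  unfolding trunc_factor_def by (auto simp: divide_le_eq_1)

lemma trunc_factor_norm_le: "R > 0 \<Longrightarrow> (trunc_factor R t)^2 * t \<le> R"
  unfolding trunc_factor_def by (auto simp: power_divide)

lemma trunc_factor_defect_le:
  assumes "R > 0" and "t \<ge> 0"
  shows "(1 - trunc_factor R t)^2 * t \<le> (if t > R then t else 0)"
proof (cases "t \<le> R")
  case False
  have "(1 - trunc_factor R t)^2 \<le> 1"
    using trunc_factor_bounds[OF assms(1), of t] by (simp add: power_le_one abs_le_iff)
  then show ?thesis
    using False assms(2) mult_right_mono[of _ 1 t] by auto
qed (simp add: trunc_factor_def)

lemma truncated_projection_sdp_obj_le:
  assumes "fin_graph V E" and "r \<ge> 1" and "R > 0"
  shows "sdp_obj r E A (\<lambda>u i. trunc_factor R (proj_norm2 r N \<omega> (x u)) * sign_sum N (\<omega> i) (x u))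
           \<le> R * SDP r V E A"
proof (rule sdp_obj_le_SDP_scaled[OF assms], intro ballI)
  fix u
  let ?t = "proj_norm2 r N \<omega> (x u)"
  have "(\<Sum>i<r. (trunc_factor R ?t * sign_sum N (\<omega> i) (x u))^2) = (trunc_factor R ?t)^2 * ?t"
    unfolding proj_norm2_def by (simp add: power_mult_distrib sum_distrib_left)
  then show "(\<Sum>i<r. (trunc_factor R ?t * sign_sum N (\<omega> i) (x u))^2) \<le> R"
    using trunc_factor_norm_le[OF assms(3)] by simp
qed

lemma truncation_defect_le:
  assumes "(\<Sum>j<N. (x j)^2) \<le> 1" and "R > 0"
  shows "(\<Sum>\<omega>\<in>sign_frames r N. \<Sum>i<r. ((1 - trunc_factor R (proj_norm2 r N \<omega> x)) * sign_sum N (\<omega> i) x)^2)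
           \<le> 12 * exp (- R / 12) * (2^N * 2)^r"
proof -
  have "(\<Sum>i<r. ((1 - trunc_factor R (proj_norm2 r N \<omega> x)) * sign_sum N (\<omega> i) x)^2)
        \<le> (if proj_norm2 r N \<omega> x > R then proj_norm2 r N \<omega> x else 0)" for \<omega>
    using trunc_factor_defect_le[OF assms(2), of "proj_norm2 r N \<omega> x"]
    unfolding proj_norm2_def by (simp add: power_mult_distrib sum_nonneg flip: sum_distrib_left)
  then have "(\<Sum>\<omega>\<in>sign_frames r N. \<Sum>i<r. ((1 - trunc_factor R (proj_norm2 r N \<omega> x)) * sign_sum N (\<omega> i) x)^2)
      \<le> (\<Sum>\<omega>\<in>sign_frames r N. if proj_norm2 r N \<omega> x > R then proj_norm2 r N \<omega> x else 0)"
    by (rule sum_mono)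
  also have "\<dots> \<le> 12 * exp (- R / 12) * (2^N * 2)^r"
    using assms(2) by (intro sum_sign_frames_tail_le[OF assms(1)]) simp
  finally show ?thesis .
qed

text \<open>Stacking the projections of \<open>x\<close> by all \<open>(2\<^sup>N)\<^sup>r\<close> sign frames, with this
  normalisation, embeds \<open>\<real>\<^sup>N\<close> isometrically: the average of \<open>\<langle>\<omega>\<^sub>i, x\<rangle>\<langle>\<omega>\<^sub>i, y\<rangle>\<close> is
  \<open>\<langle>x, y\<rangle>\<close>.\<close>

definition stacked_proj :: "nat \<Rightarrow> nat \<Rightarrow> (nat \<Rightarrow> real) \<Rightarrow> (nat \<Rightarrow> nat \<Rightarrow> real) \<times> nat \<Rightarrow> real"
  where "stacked_proj r N x = (\<lambda>(\<omega>, i). sign_sum N (\<omega> i) x / sqrt ((2^N)^r * r))"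

definition stacked_trunc :: "real \<Rightarrow> nat \<Rightarrow> nat \<Rightarrow> (nat \<Rightarrow> real) \<Rightarrow> (nat \<Rightarrow> nat \<Rightarrow> real) \<times> nat \<Rightarrow> real"
  where "stacked_trunc R r N x = (\<lambda>(\<omega>, i). trunc_factor R (proj_norm2 r N \<omega> x) * stacked_proj r N x (\<omega>, i))"

lemma sum_sign_frames_times_coords:
  "(\<Sum>k\<in>sign_frames r N \<times> {..<r}. f k) = (\<Sum>\<omega>\<in>sign_frames r N. \<Sum>i<r. f (\<omega>, i))"
  by (rule sum.cartesian_product')

lemma sum_stacked_proj_mult:
  assumes "r \<ge> 1"
  shows "(\<Sum>k\<in>sign_frames r N \<times> {..<r}. stacked_proj r N x k * stacked_proj r N y k) = ip N x y"
proof -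
  have "(\<Sum>k\<in>sign_frames r N \<times> {..<r}. stacked_proj r N x k * stacked_proj r N y k)
      = (\<Sum>\<omega>\<in>sign_frames r N. \<Sum>i<r. sign_sum N (\<omega> i) x * sign_sum N (\<omega> i) y) / ((2^N)^r * r)"
    unfolding sum_sign_frames_times_coords stacked_proj_def by (simp add: sum_divide_distrib)
  then show ?thesis
    using assms by (simp add: sum_sign_frames_ip)
qed

lemma stacked_trunc_square_le:
  assumes "R > 0"
  shows "(stacked_trunc R r N x k)^2 \<le> (stacked_proj r N x k)^2"
proof -
  obtain \<omega> i where k: "k = (\<omega>, i)" by fastforce
  have "(trunc_factor R (proj_norm2 r N \<omega> x))^2 \<le> 1"
    using trunc_factor_bounds[OF assms] by (simp add: power_le_one)
  then have "(trunc_factor R (proj_norm2 r N \<omega> x))^2 * (stacked_proj r N x k)^2 \<le> 1 * (stacked_proj r N x k)^2"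
    by (rule mult_right_mono) simp
  then show ?thesis
    unfolding k stacked_trunc_def by (simp add: power_mult_distrib)
qed

lemma sum_stacked_defect_le:
  assumes "(\<Sum>j<N. (x j)^2) \<le> 1" and "R > 0" and "r \<ge> 1"
  shows "(\<Sum>k\<in>sign_frames r N \<times> {..<r}. (stacked_proj r N x k - stacked_trunc R r N x k)^2)
           \<le> 12 * exp (- R / 12) * 2^r"
proof -
  let ?\<phi> = "\<lambda>\<omega>. trunc_factor R (proj_norm2 r N \<omega> x)"
  have "(stacked_proj r N x (\<omega>, i) - stacked_trunc R r N x (\<omega>, i))^2
        = ((1 - ?\<phi> \<omega>) * sign_sum N (\<omega> i) x)^2 / ((2^N)^r * r)" for \<omega> i
  proof -
    have "stacked_proj r N x (\<omega>, i) - stacked_trunc R r N x (\<omega>, i)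
        = (1 - ?\<phi> \<omega>) * stacked_proj r N x (\<omega>, i)"
      unfolding stacked_trunc_def by (simp add: algebra_simps)
    then show ?thesis
      by (simp add: stacked_proj_def power_divide power_mult_distrib)
  qed
  then have "(\<Sum>k\<in>sign_frames r N \<times> {..<r}. (stacked_proj r N x k - stacked_trunc R r N x k)^2)
      = (\<Sum>\<omega>\<in>sign_frames r N. \<Sum>i<r. ((1 - ?\<phi> \<omega>) * sign_sum N (\<omega> i) x)^2) / ((2^N)^r * r)"
    unfolding sum_sign_frames_times_coords by (simp add: sum_divide_distrib)
  also have "\<dots> \<le> 12 * exp (- R / 12) * (2^N * 2)^r / ((2^N)^r * r)"
    using assms by (intro divide_right_mono truncation_defect_le) auto
  also have "\<dots> = 12 * exp (- R / 12) * 2^r / r"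
    by (simp add: power_mult_distrib)
  also have "\<dots> \<le> 12 * exp (- R / 12) * 2^r"
    using divide_left_mono[of 1 "real r" "12 * exp (- R / 12) * 2^r"] assms(3) by simp
  finally show ?thesis .
qed

lemma edge_sum_stacked_trunc_le:
  assumes "fin_graph V E" and "r \<ge> 1" and "R > 0"
  shows "(\<Sum>(u,v)\<in>edges E. A u v *
            (\<Sum>k\<in>sign_frames r N \<times> {..<r}. stacked_trunc R r N (x u) k * stacked_trunc R r N (x v) k))
           \<le> (R / r) * SDP r V E A"
proof -
  define T where "T = (\<lambda>\<omega> u i. trunc_factor R (proj_norm2 r N \<omega> (x u)) * sign_sum N (\<omega> i) (x u))"
  have "(\<Sum>(u,v)\<in>edges E. A u v *
          (\<Sum>k\<in>sign_frames r N \<times> {..<r}. stacked_trunc R r N (x u) k * stacked_trunc R r N (x v) k))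
      = (\<Sum>\<omega>\<in>sign_frames r N. sdp_obj r E A (T \<omega>)) / ((2^N)^r * r)"
    unfolding sum_sign_frames_times_coords stacked_trunc_def stacked_proj_def sdp_obj_def ip_def T_def
    by (subst sum.swap) (simp add: sum_divide_distrib sum_distrib_left case_prod_beta mult_ac)
  also have "\<dots> \<le> (\<Sum>\<omega>\<in>sign_frames r N. R * SDP r V E A) / ((2^N)^r * r)"
    unfolding T_def by (intro divide_right_mono sum_mono truncated_projection_sdp_obj_le[OF assms]) simp
  also have "\<dots> = (R / r) * SDP r V E A"
    using assms(2) by (simp add: card_sign_frames)
  finally show ?thesis .
qed

lemma rounding_bound:
  assumes "fin_graph V E" and "V \<noteq> {}" and "r \<ge> 1"
    and "psd V Z" "\<forall>(u,v)\<in>E. Z u v = -1" "\<forall>u\<in>V. Z u u = lam - 1" and "lam \<ge> 1"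
    and "R > 0" and tail: "12 * exp (- R / 12) * 2^r \<le> 1 / (100 * lam^2)"
    and x: "\<forall>u\<in>V. x u \<in> usphere (card V)"
  shows "sdp_obj (card V) E A x \<le> (R / r) * SDP r V E A + SDP_inf V E A / 4"
proof -
  define N where "N = card V"
  define I where "I = sign_frames r N \<times> {..<r}"
  define a where "a = (\<lambda>u. stacked_proj r N (x u))"
  define c where "c = (\<lambda>u. stacked_trunc R r N (x u))"
  have x1: "(\<Sum>j<N. (x u j)^2) = 1" if "u \<in> V" for u
    using x that unfolding usphere_def N_def by auto
  have gram_a: "(\<Sum>k\<in>I. a u k * a v k) = ip N (x u) (x v)" for u v
    unfolding I_def a_def by (rule sum_stacked_proj_mult[OF assms(3)])
  have norm_a: "\<forall>u\<in>V. (\<Sum>k\<in>I. (a u k)^2) \<le> 1"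
    using gram_a x1 by (simp add: power2_eq_square ip_def)
  then have norm_c: "\<forall>u\<in>V. (\<Sum>k\<in>I. (c u k)^2) \<le> 1"
    unfolding a_def c_def using stacked_trunc_square_le[OF \<open>R > 0\<close>]
    by (meson order_trans sum_mono)
  have close: "\<forall>u\<in>V. (\<Sum>k\<in>I. (a u k - c u k)^2) \<le> 1 / (100 * lam^2)"
  proof
    fix u assume "u \<in> V"
    then have "(\<Sum>k\<in>I. (a u k - c u k)^2) \<le> 12 * exp (- R / 12) * 2^r"
      unfolding I_def a_def c_def using x1 by (intro sum_stacked_defect_le[OF _ \<open>R > 0\<close> assms(3)]) simp
    then show "(\<Sum>k\<in>I. (a u k - c u k)^2) \<le> 1 / (100 * lam^2)"
      using tail by linarith
  qed
  have "sdp_obj (card V) E A x = (\<Sum>(u,v)\<in>edges E. A u v * (\<Sum>k\<in>I. a u k * a v k - c u k * c v k))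
        + (\<Sum>(u,v)\<in>edges E. A u v * (\<Sum>k\<in>I. c u k * c v k))"
    unfolding sdp_obj_def N_def[symmetric] gram_a[symmetric]
    by (simp add: case_prod_beta sum_subtractf algebra_simps flip: sum.distrib)
  also have "\<dots> \<le> SDP_inf V E A / 4 + (R / r) * SDP r V E A"
    using theta_witness_close_vectors[OF assms(1,2,4-7) _ norm_a norm_c close]
      edge_sum_stacked_trunc_le[OF assms(1,3,8)]
    unfolding I_def c_def by (intro add_mono) (simp_all add: finite_sign_frames)
  finally show ?thesis by simp
qed

definition theta_feasible :: "nat set \<Rightarrow> (nat \<times> nat) set \<Rightarrow> real set"
  where "theta_feasible V E = {lam. \<exists>Z. psd V Z \<and> (\<forall>u\<in>V. Z u u = lam - 1) \<and> (\<forall>(u,v)\<in>E. Z u v = -1)}"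

lemma theta_compl_eq_Inf: "theta_compl V E = Inf (theta_feasible V E)"
  unfolding theta_compl_def theta_feasible_def ..

lemma theta_feasible_ge_1:
  assumes "fin_graph V E" and "V \<noteq> {}" and "lam \<in> theta_feasible V E"
  shows "lam \<ge> 1"
proof -
  obtain Z u where "psd V Z" "\<forall>u\<in>V. Z u u = lam - 1" "u \<in> V"
    using assms(2,3) unfolding theta_feasible_def by blast
  then show ?thesis
    using psd_diag_nonneg[of V Z u] assms(1) unfolding fin_graph_def by auto
qed

lemma card_in_theta_feasible:
  assumes "fin_graph V E"
  shows "real (card V) \<in> theta_feasible V E"
proof -
  define Z :: "nat \<Rightarrow> nat \<Rightarrow> real" where "Z = (\<lambda>u v. if u = v then real (card V) - 1 else -1)"
  have "quad V Z x = real (card V) * (\<Sum>u\<in>V. (x u)^2) - (\<Sum>u\<in>V. x u)^2" for x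
  proof -
    have "quad V Z x = (\<Sum>u\<in>V. \<Sum>v\<in>V. (if u = v then real (card V) * (x u)^2 else 0) - x u * x v)"
      unfolding quad_def Z_def by (intro sum.cong refl) (simp add: algebra_simps power2_eq_square)
    also have "\<dots> = real (card V) * (\<Sum>u\<in>V. (x u)^2) - (\<Sum>u\<in>V. x u)^2"
      using assms unfolding fin_graph_def
      by (simp add: sum_subtractf sum_distrib_left power2_eq_square sum_product sum_distrib_right mult.commute)
    finally show ?thesis .
  qed
  then have "psd V Z"
    using sum_squared_le_sum_of_squares[of x V for x]
    unfolding psd_iff_quad sym_mat_def by (simp add: Z_def mult.commute)
  moreover have "\<forall>(u,v)\<in>E. Z u v = -1"
    using assms unfolding fin_graph_def Z_def by auto
  ultimately show ?thesis
    unfolding theta_feasible_def Z_def by auto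
qed

lemma theta_compl_witness:
  assumes "fin_graph V E" and "V \<noteq> {}"
  obtains lam Z where "psd V Z" "\<forall>u\<in>V. Z u u = lam - 1" "\<forall>(u,v)\<in>E. Z u v = -1"
    and "1 \<le> lam" "lam < theta_compl V E + 1"
proof -
  have "bdd_below (theta_feasible V E)"
    using theta_feasible_ge_1[OF assms] by (rule bdd_belowI)
  then obtain lam where "lam \<in> theta_feasible V E" "lam < theta_compl V E + 1"
    using cInf_lessD[of "theta_feasible V E" "theta_compl V E + 1"] card_in_theta_feasible[OF assms(1)]
    unfolding theta_compl_eq_Inf by auto
  then show ?thesis
    using that theta_feasible_ge_1[OF assms] unfolding theta_feasible_def by blast
qed

lemma theta_compl_le_1_if_no_edges:
  assumes "fin_graph V E" and "V \<noteq> {}" and "E = {}"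
  shows "theta_compl V E \<le> 1"
  unfolding theta_compl_eq_Inf
proof (rule cInf_lower)
  have "psd V (\<lambda>u v. 0)"
    unfolding psd_iff_quad sym_mat_def quad_def by simp
  then show "1 \<in> theta_feasible V E"
    using assms(3) unfolding theta_feasible_def by force
  show "bdd_below (theta_feasible V E)"
    using theta_feasible_ge_1[OF assms(1,2)] by (rule bdd_belowI)
qed

lemma admissible_constant_pos:
  assumes "fin_graph V E" and "r \<ge> 1" and "(a,b) \<in> edges E"
    and "\<forall>A. sym_mat V A \<longrightarrow> SDP_inf V E A \<le> K * SDP r V E A"
  shows "K > 0"
proof -
  have "a \<in> V" and "a < b"
    using edges_in_vertices[OF assms(1,3)] by auto
  then have n: "card V \<ge> 1"
    using assms(1) unfolding fin_graph_def by (auto simp: Suc_le_eq card_gt_0_iff)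
  define A where "A = (\<lambda>u v. if {u,v} = {a,b} then 1 else 0 :: real)"
  have "sym_mat V A"
    unfolding sym_mat_def A_def by (simp add: insert_commute)
  have edge_val: "A u v = (if (u,v) = (a,b) then 1 else 0)" if "(u,v) \<in> edges E" for u v
    using that \<open>a < b\<close> unfolding A_def edges_def by (auto simp: doubleton_eq_iff)
  have obj: "sdp_obj s E A (\<lambda>_. e0) = 1" if "s \<ge> 1" for s
  proof -
    have "sdp_obj s E A (\<lambda>_. e0) = (\<Sum>e\<in>edges E. if e = (a,b) then 1 else 0)"
      unfolding sdp_obj_def ip_e0_e0[OF that] by (intro sum.cong) (auto simp: edge_val split: if_splits)
    also have "\<dots> = 1"
      using finite_edges[OF assms(1)] assms(3) by simp
    finally show ?thesis .
  qed
  have "1 \<le> SDP s V E A" if "s \<ge> 1" for s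
    using sdp_obj_le_SDP[OF assms(1), of "\<lambda>_. e0" s A] e0_in_usphere[OF that] obj[OF that] by simp
  then have "1 \<le> SDP_inf V E A" and "1 \<le> SDP r V E A"
    unfolding SDP_inf_def using n assms(2) by simp_all
  moreover have "SDP_inf V E A \<le> K * SDP r V E A"
    using assms(4) \<open>sym_mat V A\<close> by blast
  ultimately show ?thesis
    by (metis dual_order.trans mult_nonpos_nonneg not_le not_one_le_zero zero_le_one)
qed

lemma Kconst_le:
  assumes "fin_graph V E" and "r \<ge> 1" and "edges E \<noteq> {}"
    and "\<forall>A. sym_mat V A \<longrightarrow> SDP_inf V E A \<le> K * SDP r V E A"
  shows "Kconst r V E \<le> K"
  unfolding Kconst_def
proof (rule cInf_lower)
  obtain a b where ab: "(a,b) \<in> edges E"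
    using assms(3) by auto
  show "bdd_below {K. \<forall>A. sym_mat V A \<longrightarrow> SDP_inf V E A \<le> K * SDP r V E A}"
  proof (rule bdd_belowI)
    fix K assume "K \<in> {K. \<forall>A. sym_mat V A \<longrightarrow> SDP_inf V E A \<le> K * SDP r V E A}"
    then show "0 \<le> K"
      using admissible_constant_pos[OF assms(1,2) ab] by fastforce
  qed
qed (use assms(4) in blast)

lemma edges_nonempty_if_theta_compl_gt_1:
  assumes "fin_graph V E" and "V \<noteq> {}" and "theta_compl V E > 1"
  shows "edges E \<noteq> {}"
proof
  assume no_edges: "edges E = {}"
  have "E = {}"
  proof (rule equals0I)
    fix e assume "e \<in> E"
    then obtain u v where "(u,v) \<in> E" "(v,u) \<in> E" "u \<noteq> v"
      using assms(1) unfolding fin_graph_def by (cases e) blast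
    then have "(u,v) \<in> edges E \<or> (v,u) \<in> edges E"
      unfolding edges_def by (auto simp: neq_iff)
    then show False
      using no_edges by blast
  qed
  then show False
    using theta_compl_le_1_if_no_edges[OF assms(1,2)] assms(3) by simp
qed

text \<open>The truncation radius \<open>R = 12 (r + ln (1200 \<lambda>\<^sup>2))\<close> is the least one for which the
  Rademacher tail bound meets the closeness \<open>1/(100 \<lambda>\<^sup>2)\<close> required by the theta trick.\<close>

lemma tail_constant_le:
  assumes "lam \<ge> 1"
  shows "12 * exp (- (12 * (real r + ln (1200 * lam^2))) / 12) * 2^r \<le> 1 / (100 * lam^2)"
proof -
  have pos: "1200 * lam^2 > 0"
    using assms by simp
  have arg: "- (12 * (real r + ln (1200 * lam^2))) / 12 = - real r - ln (1200 * lam^2)"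
    by simp
  have "exp (- (12 * (real r + ln (1200 * lam^2))) / 12) = exp (- real r) / (1200 * lam^2)"
    unfolding arg exp_diff exp_ln[OF pos] ..
  moreover have "exp (- real r) * 2^r \<le> 1"
  proof -
    have "(2::real)^r \<le> exp 1 ^ r"
      using exp_ge_add_one_self[of 1] by (intro power_mono) auto
    also have "\<dots> = exp (real r)"
      by (simp flip: exp_of_nat_mult)
    finally have "exp (- real r) * 2^r \<le> exp (- real r) * exp (real r)"
      by simp
    then show ?thesis
      by (simp flip: exp_add)
  qed
  then have "(exp (- real r) * 2^r) / (100 * lam^2) \<le> 1 / (100 * lam^2)"
    by (rule divide_right_mono) simp
  ultimately show ?thesis
    by simp
qed

lemma SDP_inf_le_rounding:
  assumes "fin_graph V E" and "V \<noteq> {}" and "r \<ge> 1"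
    and "psd V Z" "\<forall>(u,v)\<in>E. Z u v = -1" "\<forall>u\<in>V. Z u u = lam - 1" and "lam \<ge> 1"
    and "R > 0" and "12 * exp (- R / 12) * 2^r \<le> 1 / (100 * lam^2)"
  shows "SDP_inf V E A \<le> (4 * R / (3 * r)) * SDP r V E A"
proof -
  have "card V \<ge> 1"
    using assms(1,2) unfolding fin_graph_def by (simp add: Suc_le_eq card_gt_0_iff)
  then have "SDP_inf V E A \<le> (R / r) * SDP r V E A + SDP_inf V E A / 4"
    unfolding SDP_inf_def using rounding_bound[OF assms] by (intro SDP_le) (simp_all add: SDP_inf_def)
  then have "SDP_inf V E A \<le> (4/3) * ((R / r) * SDP r V E A)"
    by linarith
  also have "\<dots> = (4 * R / (3 * r)) * SDP r V E A"
    by (simp add: field_simps)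
  finally show ?thesis .
qed

lemma rounding_radius_le:
  assumes "1 \<le> lam" and "lam < th + 1" and "1 \<le> r" and "real r \<le> ln th"
  shows "4 * (12 * (real r + ln (1200 * lam^2))) / (3 * r) \<le> 256 * ln th / r"
proof -
  have L: "ln th \<ge> 1" and "th > 0"
    using assms by (auto intro: ccontr)
  then have "th \<ge> 1"
    using ln_le_minus_one[of th] by linarith
  then have "lam \<le> 2 * th"
    using assms(2) by linarith
  then have "ln lam \<le> ln (2 * th)"
    using assms(1) by simp
  then have "ln lam \<le> ln 2 + ln th"
    using \<open>th > 0\<close> by (simp add: ln_mult)
  moreover have "ln (2::real) \<le> 1"
    using ln_le_minus_one[of 2] by simp
  moreover have "ln (1200::real) \<le> 11"
  proof -
    have "ln (1200::real) \<le> ln (2^11)" by simp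
    also have "\<dots> = 11 * ln 2" using ln_realpow[of 2 11] by simp
    finally show ?thesis using \<open>ln 2 \<le> 1\<close> by linarith
  qed
  moreover have "ln (1200 * lam^2) = ln 1200 + 2 * ln lam"
    using assms(1) by (simp add: ln_mult ln_realpow)
  ultimately have "4 * (12 * (real r + ln (1200 * lam^2))) \<le> 3 * (256 * ln th)"
    using assms(4) L by argo
  then have "4 * (12 * (real r + ln (1200 * lam^2))) / (3 * r) \<le> 3 * (256 * ln th) / (3 * r)"
    by (rule divide_right_mono) simp
  then show ?thesis
    by simp
qed

lemma Kconst_le_ln_theta_compl:
  assumes "fin_graph V E" and "V \<noteq> {}" and "r \<ge> 1" and "real r \<le> ln (theta_compl V E)"
  shows "Kconst r V E \<le> 256 * ln (theta_compl V E) / r"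
proof -
  obtain lam Z where Z: "psd V Z" "\<forall>u\<in>V. Z u u = lam - 1" "\<forall>(u,v)\<in>E. Z u v = -1"
    and lam: "1 \<le> lam" "lam < theta_compl V E + 1"
    by (rule theta_compl_witness[OF assms(1,2)])
  have "theta_compl V E > 0"
    using lam by linarith
  moreover have "ln (theta_compl V E) > 0"
    using assms(3,4) by linarith
  ultimately have "theta_compl V E > 1"
    using ln_gt_zero_iff by blast
  define R where "R = 12 * (real r + ln (1200 * lam^2))"
  have "1 < 1200 * lam^2"
    using lam(1) one_le_power[of lam 2] by linarith
  then have "ln (1200 * lam^2) > 0"
    by (rule ln_gt_zero)
  then have "R > 0"
    unfolding R_def by simp
  moreover have "12 * exp (- R / 12) * 2^r \<le> 1 / (100 * lam^2)"
    unfolding R_def by (rule tail_constant_le[OF lam(1)])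
  ultimately have "\<forall>A. sym_mat V A \<longrightarrow> SDP_inf V E A \<le> (4 * R / (3 * r)) * SDP r V E A"
    using SDP_inf_le_rounding[OF assms(1-3) Z(1,3,2) lam(1)] by blast
  then have "Kconst r V E \<le> 4 * R / (3 * r)"
    using Kconst_le[OF assms(1,3)] edges_nonempty_if_theta_compl_gt_1[OF assms(1,2)]
      \<open>theta_compl V E > 1\<close> by blast
  also have "\<dots> \<le> 256 * ln (theta_compl V E) / r"
    unfolding R_def by (rule rounding_radius_le[OF lam assms(3,4)])
  finally show ?thesis .
qed

text \<open>With no vertices, every \<open>\<lambda>\<close> is feasible for theta and every \<open>K\<close> is admissible, so both
  \<open>theta_compl\<close> and \<open>Kconst\<close> are the junk value \<open>Inf UNIV\<close>; the constant below absorbs it.\<close>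

lemma theta_compl_Kconst_no_vertices:
  assumes "fin_graph {} E"
  shows "theta_compl {} E = Inf UNIV" and "Kconst r {} E = Inf UNIV"
proof -
  have "E = {}"
    using assms unfolding fin_graph_def by auto
  then have "theta_feasible {} E = UNIV"
    unfolding theta_feasible_def psd_def sym_mat_def by auto
  then show "theta_compl {} E = Inf UNIV"
    unfolding theta_compl_eq_Inf by simp
  have "SDP s {} E A = 0" for s A
    using \<open>E = {}\<close> unfolding SDP_def edges_def by simp
  then show "Kconst r {} E = Inf UNIV"
    unfolding Kconst_def SDP_inf_def by simp
qed

theorem theorem6p1:
  shows "\<exists>C>0. \<forall>V E (r::nat). fin_graph V E \<longrightarrow> 1 \<le> r \<longrightarrow> real r \<le> ln (theta_compl V E)
           \<longrightarrow> Kconst r V E \<le> C * ln (theta_compl V E) / real r"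
proof (intro exI[of _ "256 + \<bar>Inf UNIV :: real\<bar>"] conjI allI impI)
  show "0 < 256 + \<bar>Inf UNIV :: real\<bar>" by simp
  fix V E and r :: nat
  assume g: "fin_graph V E" and r: "1 \<le> r" and rL: "real r \<le> ln (theta_compl V E)"
  have ratio: "ln (theta_compl V E) / r \<ge> 1"
    using r rL by simp
  show "Kconst r V E \<le> (256 + \<bar>Inf UNIV :: real\<bar>) * ln (theta_compl V E) / r"
  proof (cases "V = {}")
    case True
    then have "Kconst r V E \<le> (256 + \<bar>Inf UNIV :: real\<bar>) * 1"
      using theta_compl_Kconst_no_vertices(2) g by simp
    also have "\<dots> \<le> (256 + \<bar>Inf UNIV :: real\<bar>) * (ln (theta_compl V E) / r)"
      using ratio by (intro mult_left_mono) auto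
    finally show ?thesis by simp
  next
    case False
    have "Kconst r V E \<le> 256 * (ln (theta_compl V E) / r)"
      using Kconst_le_ln_theta_compl[OF g False r rL] by simp
    also have "\<dots> \<le> (256 + \<bar>Inf UNIV :: real\<bar>) * (ln (theta_compl V E) / r)"
      using ratio by (intro mult_right_mono) auto
    finally show ?thesis by simp
  qed
qed

end
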